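(* In any category, consider morphisms $f_1,f_2:A_{11}\to A_{12}$, $f'_1,f'_2:A_{11}\to A_{21}$, $g'_1,g'_2:A_{12}\to A_{22}$ and $g_1,g_2:A_{21}\to A_{22}$ such that $g_i\circ f'_j=g'_j\circ f_i$ for all $i,j\in\{1,2\}$, and suppose there exist $s:A_{12}\to A_{11}$ and $s':A_{21}\to A_{11}$ with $f_1 s=f_2 s=1_{A_{12}}$ and $f'_1 s'=f'_2 s'=1_{A_{21}}$. Then a morphism $x:A_{22}\to B$ satisfies $x g'_1 f_1=x g'_2 f_2$ if and only if $x g_1=x g_2$ and $x g'_1=x g'_2$. Consequently, the coequalizer of $g'_1\circ f_1$ and $g'_2\circ f_2$ is the cointersection of the coequalizer of $g_1,g_2$ and the coequalizer of $g'_1,g'_2$.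
   Context: The cointersection of two quotient maps $c:A_{22}\to C$ and $c':A_{22}\to C'$ is their pushout, i.e. the universal morphism $A_{22}\to D$ through which both factor. *)

theory Defs
  imports Main
begin

text \<open>A (small or large) category presented by its set of arrows, domain and codomain
maps, a composition operation (Comp C g f = g after f, meaningful when Cod f = Dom g)
and identities. Objects are all elements of the type 'o.\<close>

record ('o, 'a) cat =
  Arr  :: "'a set"
  Dom  :: "'a \<Rightarrow> 'o"
  Cod  :: "'a \<Rightarrow> 'o"
  Comp :: "'a \<Rightarrow> 'a \<Rightarrow> 'a"
  Ide  :: "'o \<Rightarrow> 'a"

definition Hom :: "('o, 'a) cat \<Rightarrow> 'o \<Rightarrow> 'o \<Rightarrow> 'a set" where
  "Hom C X Y = {f. f \<in> Arr C \<and> Dom C f = X \<and> Cod C f = Y}"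

definition category :: "('o, 'a) cat \<Rightarrow> bool" where
  "category C \<longleftrightarrow>
     (\<forall>X. Ide C X \<in> Hom C X X) \<and>
     (\<forall>X Y Z f g. f \<in> Hom C X Y \<longrightarrow> g \<in> Hom C Y Z \<longrightarrow> Comp C g f \<in> Hom C X Z) \<and>
     (\<forall>W X Y Z f g h. f \<in> Hom C W X \<longrightarrow> g \<in> Hom C X Y \<longrightarrow> h \<in> Hom C Y Z \<longrightarrow>
        Comp C h (Comp C g f) = Comp C (Comp C h g) f) \<and>
     (\<forall>X Y f. f \<in> Hom C X Y \<longrightarrow> Comp C f (Ide C X) = f \<and> Comp C (Ide C Y) f = f)"

definition is_coequalizer :: "('o, 'a) cat \<Rightarrow> 'a \<Rightarrow> 'a \<Rightarrow> 'a \<Rightarrow> bool" where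
  "is_coequalizer C f g q \<longleftrightarrow>
     f \<in> Arr C \<and> g \<in> Arr C \<and> Dom C f = Dom C g \<and> Cod C f = Cod C g \<and>
     q \<in> Arr C \<and> Dom C q = Cod C f \<and> Comp C q f = Comp C q g \<and>
     (\<forall>x. x \<in> Arr C \<and> Dom C x = Cod C f \<and> Comp C x f = Comp C x g \<longrightarrow>
        (\<exists>!u. u \<in> Hom C (Cod C q) (Cod C x) \<and> Comp C u q = x))"

definition is_cointersection :: "('o, 'a) cat \<Rightarrow> 'a \<Rightarrow> 'a \<Rightarrow> 'a \<Rightarrow> bool" where
  "is_cointersection C c c' q \<longleftrightarrow>
     c \<in> Arr C \<and> c' \<in> Arr C \<and> q \<in> Arr C \<and> Dom C c = Dom C q \<and> Dom C c' = Dom C q \<and>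
     (\<exists>u. u \<in> Hom C (Cod C c) (Cod C q) \<and> Comp C u c = q) \<and>
     (\<exists>u'. u' \<in> Hom C (Cod C c') (Cod C q) \<and> Comp C u' c' = q) \<and>
     (\<forall>y. y \<in> Arr C \<and> Dom C y = Dom C q \<and>
          (\<exists>v. v \<in> Hom C (Cod C c) (Cod C y) \<and> Comp C v c = y) \<and>
          (\<exists>v'. v' \<in> Hom C (Cod C c') (Cod C y) \<and> Comp C v' c' = y) \<longrightarrow>
        (\<exists>!w. w \<in> Hom C (Cod C q) (Cod C y) \<and> Comp C w q = y))"

end

theory Submission
  imports Defs
begin

text \<open>Composing with the sections s, s' shows that a morphism out of A22 coequalizing
  g'1 f1 and g'2 f2 already coequalizes g'1, g'2 and (via the commuting squares)
  g1, g2; the converse is a direct computation. Hence the coequalizer of g'1 f1, g'2 f2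
  is characterised by exactly the universal property of the cointersection of the
  coequalizers of g1, g2 and of g'1, g'2.\<close>

lemma cat_comp_in_Hom:
  "category C \<Longrightarrow> f \<in> Hom C X Y \<Longrightarrow> g \<in> Hom C Y Z \<Longrightarrow> Comp C g f \<in> Hom C X Z"
  unfolding category_def by blast

lemma cat_comp_assoc:
  "category C \<Longrightarrow> f \<in> Hom C W X \<Longrightarrow> g \<in> Hom C X Y \<Longrightarrow> h \<in> Hom C Y Z \<Longrightarrow>
   Comp C h (Comp C g f) = Comp C (Comp C h g) f"
  unfolding category_def by blast

lemma cat_comp_ide_right: "category C \<Longrightarrow> f \<in> Hom C X Y \<Longrightarrow> Comp C f (Ide C X) = f"
  unfolding category_def by blast

lemma comp_section_cancel:
  assumes cat: "category C" and f: "f \<in> Hom C X Y"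
    and s: "s \<in> Hom C Y X" "Comp C f s = Ide C Y" and a: "a \<in> Hom C Y Z"
  shows "Comp C (Comp C a f) s = a"
  using cat_comp_assoc[OF cat s(1) f a] s(2) cat_comp_ide_right[OF cat a] by simp

lemma coequalizes_composite_iff:
  assumes cat: "category C"
    and f: "f1 \<in> Hom C A11 A12" "f2 \<in> Hom C A11 A12"
    and f': "f'1 \<in> Hom C A11 A21" "f'2 \<in> Hom C A11 A21"
    and g': "g'1 \<in> Hom C A12 A22" "g'2 \<in> Hom C A12 A22"
    and g: "g1 \<in> Hom C A21 A22" "g2 \<in> Hom C A21 A22"
    and comm: "Comp C g1 f'1 = Comp C g'1 f1" "Comp C g1 f'2 = Comp C g'2 f1"
              "Comp C g2 f'2 = Comp C g'2 f2"
    and s: "s \<in> Hom C A12 A11" "Comp C f1 s = Ide C A12" "Comp C f2 s = Ide C A12"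
    and s': "s' \<in> Hom C A21 A11" "Comp C f'1 s' = Ide C A21" "Comp C f'2 s' = Ide C A21"
    and x: "x \<in> Hom C A22 B"
  shows "Comp C x (Comp C g'1 f1) = Comp C x (Comp C g'2 f2) \<longleftrightarrow>
         Comp C x g1 = Comp C x g2 \<and> Comp C x g'1 = Comp C x g'2"
proof
  assume H: "Comp C x (Comp C g'1 f1) = Comp C x (Comp C g'2 f2)"
  have x_f: "Comp C x (Comp C g'1 f1) = Comp C (Comp C x g'1) f1"
      "Comp C x (Comp C g'2 f2) = Comp C (Comp C x g'2) f2"
    using cat_comp_assoc[OF cat f(1) g'(1) x] cat_comp_assoc[OF cat f(2) g'(2) x] by simp_all
  have x_f': "Comp C x (Comp C g1 f'1) = Comp C (Comp C x g1) f'1"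
      "Comp C x (Comp C g2 f'2) = Comp C (Comp C x g2) f'2"
    using cat_comp_assoc[OF cat f'(1) g(1) x] cat_comp_assoc[OF cat f'(2) g(2) x] by simp_all
  have "Comp C x g'1 = Comp C (Comp C x (Comp C g'1 f1)) s"
    using comp_section_cancel[OF cat f(1) s(1,2) cat_comp_in_Hom[OF cat g'(1) x]] x_f by simp
  also have "\<dots> = Comp C x g'2"
    using comp_section_cancel[OF cat f(2) s(1,3) cat_comp_in_Hom[OF cat g'(2) x]] x_f H by simp
  finally have g'_eq: "Comp C x g'1 = Comp C x g'2" .
  have "Comp C x g1 = Comp C (Comp C x (Comp C g'1 f1)) s'"
    using comp_section_cancel[OF cat f'(1) s'(1,2) cat_comp_in_Hom[OF cat g(1) x]] x_f' comm(1)
    by simp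
  also have "\<dots> = Comp C x g2"
    using comp_section_cancel[OF cat f'(2) s'(1,3) cat_comp_in_Hom[OF cat g(2) x]] x_f' comm(3) H
    by simp
  finally show "Comp C x g1 = Comp C x g2 \<and> Comp C x g'1 = Comp C x g'2" using g'_eq by simp
next
  assume H: "Comp C x g1 = Comp C x g2 \<and> Comp C x g'1 = Comp C x g'2"
  have "Comp C x (Comp C g'1 f1) = Comp C (Comp C x g'1) f1"
    using cat_comp_assoc[OF cat f(1) g'(1) x] .
  also have "\<dots> = Comp C (Comp C x g'2) f1" using H by simp
  also have "\<dots> = Comp C (Comp C x g1) f'2"
    using cat_comp_assoc[OF cat f(1) g'(2) x] cat_comp_assoc[OF cat f'(2) g(1) x] comm(2) by simp
  also have "\<dots> = Comp C (Comp C x g2) f'2" using H by simp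
  also have "\<dots> = Comp C x (Comp C g'2 f2)"
    using cat_comp_assoc[OF cat f'(2) g(2) x] comm(3) by simp
  finally show "Comp C x (Comp C g'1 f1) = Comp C x (Comp C g'2 f2)" .
qed

lemma coequalizer_in_Hom:
  "is_coequalizer C f g q \<Longrightarrow> q \<in> Hom C (Cod C f) (Cod C q)"
  unfolding is_coequalizer_def Hom_def by auto

lemma coequalizer_coequalizes:
  "is_coequalizer C f g q \<Longrightarrow> Comp C q f = Comp C q g"
  unfolding is_coequalizer_def by auto

lemma coequalizer_factors_uniquely:
  assumes q: "is_coequalizer C f g q" and x: "x \<in> Hom C (Cod C f) B"
    and eq: "Comp C x f = Comp C x g"
  shows "\<exists>!u. u \<in> Hom C (Cod C q) B \<and> Comp C u q = x"
proof -
  have "x \<in> Arr C" "Dom C x = Cod C f" "Cod C x = B" using x by (simp_all add: Hom_def)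
  with q eq have "\<exists>!u. u \<in> Hom C (Cod C q) (Cod C x) \<and> Comp C u q = x"
    unfolding is_coequalizer_def by blast
  with \<open>Cod C x = B\<close> show ?thesis by simp
qed

lemma factor_through_coequalizer_coequalizes:
  assumes cat: "category C" and f: "f \<in> Hom C X Y" and g: "g \<in> Hom C X Y"
    and q: "is_coequalizer C f g q" and v: "v \<in> Hom C (Cod C q) B"
  shows "Comp C (Comp C v q) f = Comp C (Comp C v q) g"
proof -
  have qH: "q \<in> Hom C Y (Cod C q)" using coequalizer_in_Hom[OF q] f by (simp add: Hom_def)
  have "Comp C (Comp C v q) f = Comp C v (Comp C q f)" using cat_comp_assoc[OF cat f qH v] ..
  also have "\<dots> = Comp C v (Comp C q g)" using coequalizer_coequalizes[OF q] by simp
  also have "\<dots> = Comp C (Comp C v q) g" using cat_comp_assoc[OF cat g qH v] .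
  finally show ?thesis .
qed

lemma coequalizer_is_cointersection:
  assumes cat: "category C"
    and h: "h1 \<in> Hom C X A" "h2 \<in> Hom C X A"
    and g: "g1 \<in> Hom C Y A" "g2 \<in> Hom C Y A"
    and g': "g'1 \<in> Hom C Y' A" "g'2 \<in> Hom C Y' A"
    and same_coequalizing: "\<And>B x. x \<in> Hom C A B \<Longrightarrow>
       Comp C x h1 = Comp C x h2 \<longleftrightarrow> Comp C x g1 = Comp C x g2 \<and> Comp C x g'1 = Comp C x g'2"
    and q: "is_coequalizer C h1 h2 q"
    and c: "is_coequalizer C g1 g2 c" and c': "is_coequalizer C g'1 g'2 c'"
  shows "is_cointersection C c c' q"
proof -
  have qH: "q \<in> Hom C A (Cod C q)" using coequalizer_in_Hom[OF q] h by (simp add: Hom_def)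
  have cH: "c \<in> Hom C A (Cod C c)" using coequalizer_in_Hom[OF c] g by (simp add: Hom_def)
  have c'H: "c' \<in> Hom C A (Cod C c')" using coequalizer_in_Hom[OF c'] g' by (simp add: Hom_def)
  have "Comp C q g1 = Comp C q g2 \<and> Comp C q g'1 = Comp C q g'2"
    using same_coequalizing[OF qH] coequalizer_coequalizes[OF q] by simp
  moreover have "Cod C g1 = A" "Cod C g'1 = A" using g(1) g'(1) by (simp_all add: Hom_def)
  ultimately have "\<exists>!u. u \<in> Hom C (Cod C c) (Cod C q) \<and> Comp C u c = q"
    and "\<exists>!u. u \<in> Hom C (Cod C c') (Cod C q) \<and> Comp C u c' = q"
    using coequalizer_factors_uniquely[OF c] coequalizer_factors_uniquely[OF c'] qH by simp_all
  then have q_through_c: "\<exists>u. u \<in> Hom C (Cod C c) (Cod C q) \<and> Comp C u c = q"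
    and q_through_c': "\<exists>u. u \<in> Hom C (Cod C c') (Cod C q) \<and> Comp C u c' = q"
    by (simp_all add: ex1_implies_ex)
  have universal: "\<exists>!w. w \<in> Hom C (Cod C q) (Cod C y) \<and> Comp C w q = y"
    if y: "y \<in> Arr C" "Dom C y = Dom C q"
      and y_through_c: "\<exists>v. v \<in> Hom C (Cod C c) (Cod C y) \<and> Comp C v c = y"
      and y_through_c': "\<exists>v'. v' \<in> Hom C (Cod C c') (Cod C y) \<and> Comp C v' c' = y" for y
  proof -
    obtain v where v: "v \<in> Hom C (Cod C c) (Cod C y)" "Comp C v c = y"
      using y_through_c by blast
    obtain v' where v': "v' \<in> Hom C (Cod C c') (Cod C y)" "Comp C v' c' = y"
      using y_through_c' by blast
    have yH: "y \<in> Hom C A (Cod C y)" using y qH by (simp add: Hom_def)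
    have "Comp C y h1 = Comp C y h2"
      using same_coequalizing[OF yH]
        factor_through_coequalizer_coequalizes[OF cat g c v(1)]
        factor_through_coequalizer_coequalizes[OF cat g' c' v'(1)] v(2) v'(2)
      by simp
    moreover have "Cod C h1 = A" using h(1) by (simp add: Hom_def)
    ultimately show ?thesis using coequalizer_factors_uniquely[OF q] yH by simp
  qed
  show ?thesis
    unfolding is_cointersection_def
    using q_through_c q_through_c' universal qH cH c'H by (simp add: Hom_def)
qed

theorem proposition1:
  fixes C :: "('o, 'a) cat"
    and A11 A12 A21 A22 :: 'o
    and f1 f2 f'1 f'2 g1 g2 g'1 g'2 s s' :: 'a
  assumes cat: "category C"
    and f: "f1 \<in> Hom C A11 A12" "f2 \<in> Hom C A11 A12"
    and f': "f'1 \<in> Hom C A11 A21" "f'2 \<in> Hom C A11 A21"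
    and g': "g'1 \<in> Hom C A12 A22" "g'2 \<in> Hom C A12 A22"
    and g: "g1 \<in> Hom C A21 A22" "g2 \<in> Hom C A21 A22"
    and comm: "Comp C g1 f'1 = Comp C g'1 f1" "Comp C g1 f'2 = Comp C g'2 f1"
              "Comp C g2 f'1 = Comp C g'1 f2" "Comp C g2 f'2 = Comp C g'2 f2"
    and s: "s \<in> Hom C A12 A11" "Comp C f1 s = Ide C A12" "Comp C f2 s = Ide C A12"
    and s': "s' \<in> Hom C A21 A11" "Comp C f'1 s' = Ide C A21" "Comp C f'2 s' = Ide C A21"
  shows "(\<forall>B x. x \<in> Hom C A22 B \<longrightarrow>
            (Comp C x (Comp C g'1 f1) = Comp C x (Comp C g'2 f2) \<longleftrightarrow>
             Comp C x g1 = Comp C x g2 \<and> Comp C x g'1 = Comp C x g'2))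
       \<and> (\<forall>q c c'. is_coequalizer C (Comp C g'1 f1) (Comp C g'2 f2) q \<and>
                   is_coequalizer C g1 g2 c \<and> is_coequalizer C g'1 g'2 c' \<longrightarrow>
                   is_cointersection C c c' q)"
proof -
  note same_coequalizing =
    coequalizes_composite_iff[OF cat f f' g' g comm(1,2,4) s s']
  have "is_cointersection C c c' q"
    if "is_coequalizer C (Comp C g'1 f1) (Comp C g'2 f2) q"
      "is_coequalizer C g1 g2 c" "is_coequalizer C g'1 g'2 c'" for q c c'
    using coequalizer_is_cointersection[OF cat cat_comp_in_Hom[OF cat f(1) g'(1)]
        cat_comp_in_Hom[OF cat f(2) g'(2)] g g' same_coequalizing that] .
  with same_coequalizing show ?thesis by simp
qed

end
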